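(* For every positive integer $t$, every $t$-spike $Q$ with an associated $t$-spike partition $(B_1,\dots,B_t;C_1,\dots,C_t)$, and every labeling $L$ of $Q$ for which there exist distinct $p,q$ with $L(b)=p$ for all $b\in B_1\cup\dots\cup B_t$ and $L(c)=q$ for all $c\in C_1\cup\dots\cup C_t$, we have $\mathrm{cwd}(Q,L)\le 4$.
   Context: Graphs are finite and simple. For disjoint vertex sets $X,Y$, $X$ is complete (anticomplete) to $Y$ if every vertex of $X$ is adjacent (nonadjacent) to every vertex of $Y$. A $t$-spike is a graph $Q$ whose vertex set can be partitioned into nonempty cliques $B_1,\dots,B_t,C_1,\dots,C_t$ such that the $B_i$ are pairwise anticomplete, the $C_i$ are pairwise complete, $B_i$ is anticomplete to $C_j$ for all $i\ne j$, and for each $i$, $B_i$ can be ordered $b^i_1,\dots,b^i_{r_i}$ so that $N_Q(b^i_{r_i})\cap C_i\subseteq\dots\subseteq N_Q(b^i_1)\cap C_i$; $(B_1,\dots,B_t;C_1,\dots,C_t)$ is then a $t$-spike partition. A labeling of $Q$ is any function with domain $V(Q)$, and $(Q,L)$ is a labeled graph. The clique-width $\mathrm{cwd}(Q,L)$ is the minimum number of labels needed to construct $Q$ with final labeling exactly $L$ using: (1) creation of a new vertex with label $i$; (2) disjoint union of two labeled graphs; (3) joining by an edge every vertex labeled $i$ to every vertex labeled $j$ ($i\ne j$); (4) renaming label $i$ to label $j$. *)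

theory Defs
  imports Main
begin

text \<open>A graph is given by a vertex set V and an adjacency relation E; only E restricted
to V matters.\<close>

definition simple_graph :: "'v set \<Rightarrow> ('v \<Rightarrow> 'v \<Rightarrow> bool) \<Rightarrow> bool" where
  "simple_graph V E \<longleftrightarrow> finite V \<and> (\<forall>x\<in>V. \<forall>y\<in>V. E x y \<longleftrightarrow> E y x) \<and> (\<forall>x\<in>V. \<not> E x x)"

definition is_clique :: "('v \<Rightarrow> 'v \<Rightarrow> bool) \<Rightarrow> 'v set \<Rightarrow> bool" where
  "is_clique E X \<longleftrightarrow> (\<forall>x\<in>X. \<forall>y\<in>X. x \<noteq> y \<longrightarrow> E x y)"

definition complete_to :: "('v \<Rightarrow> 'v \<Rightarrow> bool) \<Rightarrow> 'v set \<Rightarrow> 'v set \<Rightarrow> bool" where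
  "complete_to E X Y \<longleftrightarrow> (\<forall>x\<in>X. \<forall>y\<in>Y. E x y)"

definition anticomplete_to :: "('v \<Rightarrow> 'v \<Rightarrow> bool) \<Rightarrow> 'v set \<Rightarrow> 'v set \<Rightarrow> bool" where
  "anticomplete_to E X Y \<longleftrightarrow> (\<forall>x\<in>X. \<forall>y\<in>Y. \<not> E x y)"

definition nbhd :: "'v set \<Rightarrow> ('v \<Rightarrow> 'v \<Rightarrow> bool) \<Rightarrow> 'v \<Rightarrow> 'v set" where
  "nbhd V E x = {y \<in> V. E x y}"

definition spike_partition ::
  "'v set \<Rightarrow> ('v \<Rightarrow> 'v \<Rightarrow> bool) \<Rightarrow> nat \<Rightarrow> (nat \<Rightarrow> 'v set) \<Rightarrow> (nat \<Rightarrow> 'v set) \<Rightarrow> bool" where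
  "spike_partition V E t B C \<longleftrightarrow>
     \<comment> \<open>partition of V into the 2t nonempty sets\<close>
     (\<Union>i\<in>{1..t}. B i \<union> C i) = V \<and>
     (\<forall>i\<in>{1..t}. B i \<noteq> {} \<and> C i \<noteq> {}) \<and>
     (\<forall>i\<in>{1..t}. \<forall>j\<in>{1..t}. B i \<inter> C j = {}) \<and>
     (\<forall>i\<in>{1..t}. \<forall>j\<in>{1..t}. i \<noteq> j \<longrightarrow> B i \<inter> B j = {} \<and> C i \<inter> C j = {}) \<and>
     \<comment> \<open>cliques\<close>
     (\<forall>i\<in>{1..t}. is_clique E (B i) \<and> is_clique E (C i)) \<and>
     \<comment> \<open>adjacency between parts\<close>
     (\<forall>i\<in>{1..t}. \<forall>j\<in>{1..t}. i \<noteq> j \<longrightarrow>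
        anticomplete_to E (B i) (B j) \<and> complete_to E (C i) (C j) \<and> anticomplete_to E (B i) (C j)) \<and>
     \<comment> \<open>nested neighbourhoods into C_i\<close>
     (\<forall>i\<in>{1..t}. \<exists>bs. distinct bs \<and> set bs = B i \<and>
        (\<forall>k l. k \<le> l \<and> l < length bs \<longrightarrow>
           nbhd V E (bs ! l) \<inter> C i \<subseteq> nbhd V E (bs ! k) \<inter> C i))"

definition is_spike :: "'v set \<Rightarrow> ('v \<Rightarrow> 'v \<Rightarrow> bool) \<Rightarrow> nat \<Rightarrow> bool" where
  "is_spike V E t \<longleftrightarrow> (\<exists>B C. spike_partition V E t B C)"

datatype ('v, 'a) cwexp =
    Create 'v 'a
  | DUnion "('v, 'a) cwexp" "('v, 'a) cwexp"
  | Join 'a 'a "('v, 'a) cwexp"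
  | Relabel 'a 'a "('v, 'a) cwexp"

fun cw_verts :: "('v, 'a) cwexp \<Rightarrow> 'v set" where
  "cw_verts (Create v i) = {v}"
| "cw_verts (DUnion e f) = cw_verts e \<union> cw_verts f"
| "cw_verts (Join i j e) = cw_verts e"
| "cw_verts (Relabel i j e) = cw_verts e"

fun cw_lab :: "('v, 'a) cwexp \<Rightarrow> 'v \<Rightarrow> 'a" where
  "cw_lab (Create v i) = (\<lambda>_. i)"
| "cw_lab (DUnion e f) = (\<lambda>x. if x \<in> cw_verts e then cw_lab e x else cw_lab f x)"
| "cw_lab (Join i j e) = cw_lab e"
| "cw_lab (Relabel i j e) = (\<lambda>x. if cw_lab e x = i then j else cw_lab e x)"

fun cw_edge :: "('v, 'a) cwexp \<Rightarrow> 'v \<Rightarrow> 'v \<Rightarrow> bool" where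
  "cw_edge (Create v i) = (\<lambda>x y. False)"
| "cw_edge (DUnion e f) = (\<lambda>x y. cw_edge e x y \<or> cw_edge f x y)"
| "cw_edge (Join i j e) = (\<lambda>x y. cw_edge e x y \<or>
     (x \<in> cw_verts e \<and> y \<in> cw_verts e \<and>
      ((cw_lab e x = i \<and> cw_lab e y = j) \<or> (cw_lab e x = j \<and> cw_lab e y = i))))"
| "cw_edge (Relabel i j e) = cw_edge e"

fun cw_wf :: "('v, 'a) cwexp \<Rightarrow> bool" where
  "cw_wf (Create v i) = True"
| "cw_wf (DUnion e f) = (cw_wf e \<and> cw_wf f \<and> cw_verts e \<inter> cw_verts f = {})"
| "cw_wf (Join i j e) = (i \<noteq> j \<and> cw_wf e)"
| "cw_wf (Relabel i j e) = cw_wf e"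

fun cw_labels :: "('v, 'a) cwexp \<Rightarrow> 'a set" where
  "cw_labels (Create v i) = {i}"
| "cw_labels (DUnion e f) = cw_labels e \<union> cw_labels f"
| "cw_labels (Join i j e) = {i, j} \<union> cw_labels e"
| "cw_labels (Relabel i j e) = {i, j} \<union> cw_labels e"

text \<open>Labels available during
the construction are those of L's codomain (Inl) plus unboundedly many auxiliary
labels (Inr); the final labeling must be exactly L.\<close>
definition cw_constructs ::
  "('v, 'l + nat) cwexp \<Rightarrow> 'v set \<Rightarrow> ('v \<Rightarrow> 'v \<Rightarrow> bool) \<Rightarrow> ('v \<Rightarrow> 'l) \<Rightarrow> bool" where
  "cw_constructs e V E L \<longleftrightarrow> cw_wf e \<and> cw_verts e = V \<and>
     (\<forall>x\<in>V. \<forall>y\<in>V. cw_edge e x y \<longleftrightarrow> E x y) \<and>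
     (\<forall>x\<in>V. cw_lab e x = Inl (L x))"

definition cwd :: "'v set \<Rightarrow> ('v \<Rightarrow> 'v \<Rightarrow> bool) \<Rightarrow> ('v \<Rightarrow> 'l) \<Rightarrow> nat" where
  "cwd V E L = (LEAST k. \<exists>e. cw_constructs e V E L \<and> card (cw_labels e) = k)"

end

(* Q is assembled part by part.  A single part B_i \<union> C_i can be built with three labels,
   adding one vertex at a time: every nonempty subset of it contains either a vertex of B_i
   adjacent to all the others (one with the largest neighbourhood in C_i) or a vertex of C_i
   adjacent to exactly the C_i-vertices, so the vertices can be added in an order in which each
   new vertex sees precisely the earlier vertices of some given labels.  Once B_1 \<union> .. \<union> C_i
   carries its final labels p and q, the next part is built with two auxiliary labels, a single
   join connects q to the auxiliary C-label (the C_j are pairwise complete and there are no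
   other edges between parts), and relabelling restores p and q. *)

theory Submission
  imports Defs
begin

definition cw_represents :: "('v, 'a) cwexp \<Rightarrow> 'v set \<Rightarrow> ('v \<Rightarrow> 'v \<Rightarrow> bool) \<Rightarrow> ('v \<Rightarrow> 'a) \<Rightarrow> bool" where
  "cw_represents e S E lab \<longleftrightarrow> cw_wf e \<and> cw_verts e = S \<and>
     (\<forall>x\<in>S. \<forall>y\<in>S. cw_edge e x y \<longleftrightarrow> E x y) \<and> (\<forall>x\<in>S. cw_lab e x = lab x)"

lemma cw_constructs_iff_represents:
  "cw_constructs e V E L \<longleftrightarrow> cw_represents e V E (\<lambda>x. Inl (L x))"
  by (simp add: cw_constructs_def cw_represents_def)

lemma cwd_le_card_labels:
  assumes "cw_constructs e V E L"
  shows "cwd V E L \<le> card (cw_labels e)"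
  unfolding cwd_def by (rule Least_le) (use assms in blast)

lemma cw_edge_imp_verts: "cw_edge e x y \<Longrightarrow> x \<in> cw_verts e \<and> y \<in> cw_verts e"
  by (induction e) auto

lemma cw_represents_Create: "\<not> E v v \<Longrightarrow> cw_represents (Create v a) {v} E (\<lambda>_. a)"
  by (simp add: cw_represents_def)

lemma cw_represents_cong:
  "cw_represents e S E lab \<Longrightarrow> (\<And>x. x \<in> S \<Longrightarrow> lab x = lab' x) \<Longrightarrow> cw_represents e S E lab'"
  by (simp add: cw_represents_def)

lemma cw_represents_Relabel:
  "cw_represents e S E lab \<Longrightarrow> cw_represents (Relabel a b e) S E (\<lambda>x. if lab x = a then b else lab x)"
  by (simp add: cw_represents_def)

fun joins :: "'a \<Rightarrow> 'a list \<Rightarrow> ('v, 'a) cwexp \<Rightarrow> ('v, 'a) cwexp" where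
  "joins a [] e = e"
| "joins a (b # bs) e = Join a b (joins a bs e)"

lemma cw_verts_joins [simp]: "cw_verts (joins a bs e) = cw_verts e"
  by (induction bs) auto

lemma cw_lab_joins [simp]: "cw_lab (joins a bs e) = cw_lab e"
  by (induction bs) auto

lemma cw_wf_joins [simp]: "cw_wf (joins a bs e) \<longleftrightarrow> a \<notin> set bs \<and> cw_wf e"
  by (induction bs) auto

lemma cw_labels_joins: "cw_labels (joins a bs e) \<subseteq> insert a (set bs \<union> cw_labels e)"
  by (induction bs) auto

lemma cw_edge_joins:
  "cw_edge (joins a bs e) x y \<longleftrightarrow> cw_edge e x y \<or> (x \<in> cw_verts e \<and> y \<in> cw_verts e \<and>
     (cw_lab e x = a \<and> cw_lab e y \<in> set bs \<or> cw_lab e x \<in> set bs \<and> cw_lab e y = a))"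
  by (induction bs) auto

lemma cw_represents_joins_DUnion:
  assumes e: "cw_represents e S E lab" and f: "cw_represents f S' E lab'"
    and disj: "S \<inter> S' = {}" and "a \<notin> set bs"
    and inner: "\<forall>x\<in>S. \<forall>y\<in>S. lab x = a \<longrightarrow> lab y \<notin> set bs"
      "\<forall>x\<in>S'. \<forall>y\<in>S'. lab' x = a \<longrightarrow> lab' y \<notin> set bs"
    and cross: "\<forall>x\<in>S. \<forall>y\<in>S'. E x y \<longleftrightarrow> lab x = a \<and> lab' y \<in> set bs \<or> lab x \<in> set bs \<and> lab' y = a"
    and sym: "\<forall>x\<in>S. \<forall>y\<in>S'. E y x \<longleftrightarrow> E x y"
  shows "cw_represents (joins a bs (DUnion e f)) (S \<union> S') E (\<lambda>x. if x \<in> S then lab x else lab' x)"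
    (is "cw_represents ?g _ _ ?lab")
proof -
  have verts: "cw_verts e = S" "cw_verts f = S'" and lab: "\<forall>x\<in>S. cw_lab e x = lab x" "\<forall>x\<in>S'. cw_lab f x = lab' x"
    using e f by (simp_all add: cw_represents_def)
  have edge_e: "cw_edge e x y \<longleftrightarrow> x \<in> S \<and> y \<in> S \<and> E x y"
    and edge_f: "cw_edge f x y \<longleftrightarrow> x \<in> S' \<and> y \<in> S' \<and> E x y" for x y
    using e f cw_edge_imp_verts[of e x y] cw_edge_imp_verts[of f x y]
    unfolding cw_represents_def by auto
  have "cw_edge ?g x y \<longleftrightarrow> E x y" if "x \<in> S \<union> S'" "y \<in> S \<union> S'" for x y
  proof -
    have "cw_edge ?g x y \<longleftrightarrow> cw_edge e x y \<or> cw_edge f x y \<or>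
        (?lab x = a \<and> ?lab y \<in> set bs \<or> ?lab x \<in> set bs \<and> ?lab y = a)"
      using that verts lab disj by (auto simp: cw_edge_joins)
    moreover have "E x y \<longleftrightarrow> E y x" if "x \<in> S'" "y \<in> S"
      using that sym by blast
    ultimately show ?thesis
      using that disj inner[rule_format, of x y] inner[rule_format, of y x]
        cross[rule_format, of x y] cross[rule_format, of y x]
      unfolding edge_e edge_f by (cases "x \<in> S"; cases "y \<in> S") auto
  qed
  then show ?thesis
    using e f disj \<open>a \<notin> set bs\<close> by (auto simp: cw_represents_def)
qed

lemma simple_graph_subset: "simple_graph V E \<Longrightarrow> W \<subseteq> V \<Longrightarrow> simple_graph W E"
  unfolding simple_graph_def using finite_subset by blast

lemma cw_represents_by_elimination:
  fixes lab :: "'v \<Rightarrow> 'a" and J :: "'v \<Rightarrow> 'a list"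
  assumes "simple_graph S E" "S \<noteq> {}"
    and "T \<notin> lab ` S" "\<forall>x\<in>S. T \<notin> set (J x)"
    and "\<forall>S'\<subseteq>S. S' \<noteq> {} \<longrightarrow> (\<exists>v\<in>S'. \<forall>u\<in>S' - {v}. E v u \<longleftrightarrow> lab u \<in> set (J v))"
  shows "\<exists>e. cw_represents e S E lab \<and> cw_labels e \<subseteq> insert T (lab ` S \<union> (\<Union>x\<in>S. set (J x)))"
proof -
  have "finite S"
    using assms(1) by (simp add: simple_graph_def)
  then show ?thesis
    using assms
  proof (induction S rule: finite_psubset_induct)
    case (psubset S)
    note simple = psubset.prems(1) and T_lab = psubset.prems(3) and T_J = psubset.prems(4)
      and elim = psubset.prems(5)
    have irrefl: "\<forall>x\<in>S. \<not> E x x" and sym: "\<forall>x\<in>S. \<forall>y\<in>S. E x y \<longleftrightarrow> E y x"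
      using simple unfolding simple_graph_def by blast+
    obtain v where v: "v \<in> S" and nbrs_v: "\<forall>u\<in>S - {v}. E v u \<longleftrightarrow> lab u \<in> set (J v)"
      using elim psubset.prems(2) by blast
    show ?case
    proof (cases "S = {v}")
      case True
      then have "cw_represents (Create v (lab v)) S E lab"
        using irrefl by (simp add: cw_represents_def)
      then show ?thesis
        by (intro exI[of _ "Create v (lab v)"]) (simp add: \<open>S = {v}\<close>)
    next
      case False
      define S0 where "S0 = S - {v}"
      have S0: "S0 \<subset> S" "S0 \<noteq> {}" "S = S0 \<union> {v}" "S0 \<inter> {v} = {}"
        using v False unfolding S0_def by auto
      obtain e0 where e0: "cw_represents e0 S0 E lab"
        and labels_e0: "cw_labels e0 \<subseteq> insert T (lab ` S0 \<union> (\<Union>x\<in>S0. set (J x)))"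
      proof -
        have "S0 \<subseteq> S"
          using S0(1) by blast
        then have "simple_graph S0 E" "T \<notin> lab ` S0" "\<forall>x\<in>S0. T \<notin> set (J x)"
          "\<forall>S'\<subseteq>S0. S' \<noteq> {} \<longrightarrow> (\<exists>v\<in>S'. \<forall>u\<in>S' - {v}. E v u \<longleftrightarrow> lab u \<in> set (J v))"
          using simple_graph_subset[OF simple] T_lab T_J elim by (blast, blast, blast, meson order_trans)
        then show ?thesis
          using psubset.IH[OF S0(1) _ S0(2)] that by blast
      qed
      \<comment> \<open>v enters with the label T, unused so far, so joining T to J v adds exactly its edges\<close>
      have "cw_represents (joins T (J v) (DUnion e0 (Create v T))) (S0 \<union> {v}) E
          (\<lambda>x. if x \<in> S0 then lab x else T)"
      proof (rule cw_represents_joins_DUnion[OF e0 cw_represents_Create])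
        show "\<not> E v v" "T \<notin> set (J v)"
          using irrefl T_J v by auto
        show "\<forall>x\<in>S0. \<forall>y\<in>S0. lab x = T \<longrightarrow> lab y \<notin> set (J v)"
          using T_lab S0(1) by auto
        show sym_v: "\<forall>x\<in>S0. \<forall>y\<in>{v}. E y x \<longleftrightarrow> E x y"
          using sym v S0(1) by blast
        show "\<forall>x\<in>S0. \<forall>y\<in>{v}. E x y \<longleftrightarrow> lab x = T \<and> T \<in> set (J v) \<or> lab x \<in> set (J v) \<and> T = T"
          using nbrs_v sym_v T_lab S0(1) unfolding S0_def by blast
      qed (use S0 T_J v in auto)
      then have "cw_represents (Relabel T (lab v) (joins T (J v) (DUnion e0 (Create v T)))) S E lab"
        unfolding S0(3)
        by (rule cw_represents_cong[OF cw_represents_Relabel]) (use S0 T_lab in auto)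
      moreover have "cw_labels (Relabel T (lab v) (joins T (J v) (DUnion e0 (Create v T))))
          \<subseteq> insert T (lab ` S \<union> (\<Union>x\<in>S. set (J x)))"
        using labels_e0 cw_labels_joins[of T "J v" "DUnion e0 (Create v T)"] S0(3) by auto
      ultimately show ?thesis
        by blast
    qed
  qed
qed

lemma list_antitone_has_greatest:
  fixes f :: "'a \<Rightarrow> 'b::order"
  assumes antitone: "\<forall>k l. k \<le> l \<and> l < length xs \<longrightarrow> f (xs ! l) \<le> f (xs ! k)"
    and "X \<subseteq> set xs" "X \<noteq> {}"
  shows "\<exists>v\<in>X. \<forall>u\<in>X. f u \<le> f v"
proof -
  define P where "P k \<longleftrightarrow> k < length xs \<and> xs ! k \<in> X" for k
  obtain x where "x \<in> X"
    using assms(3) by blast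
  moreover have "x \<in> set xs"
    using \<open>x \<in> X\<close> assms(2) by blast
  ultimately have "\<exists>k. P k"
    unfolding P_def by (auto simp: in_set_conv_nth)
  then have first: "P (Least P)"
    by (rule LeastI_ex)
  have "f u \<le> f (xs ! Least P)" if "u \<in> X" for u
  proof -
    have "u \<in> set xs"
      using that assms(2) by blast
    then obtain l where "l < length xs" "xs ! l = u"
      by (auto simp: in_set_conv_nth)
    moreover from this have "Least P \<le> l"
      using that by (intro Least_le) (simp add: P_def)
    ultimately show ?thesis
      using antitone by blast
  qed
  then show ?thesis
    using first unfolding P_def by blast
qed

lemma clique_pair_elimination_vertex:
  assumes "X \<inter> Y = {}" "is_clique E X" "is_clique E Y"
    and sym: "\<forall>x\<in>X \<union> Y. \<forall>y\<in>X \<union> Y. E x y \<longleftrightarrow> E y x"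
    and dominant: "\<forall>X'\<subseteq>X. X' \<noteq> {} \<longrightarrow> (\<exists>v\<in>X'. \<forall>u\<in>X'. \<forall>y\<in>Y. E u y \<longrightarrow> E v y)"
    and "S \<subseteq> X \<union> Y" "S \<noteq> {}"
  shows "\<exists>v\<in>S. \<forall>u\<in>S - {v}. E v u \<longleftrightarrow> v \<in> X \<or> u \<notin> X"
proof (cases "\<exists>c\<in>S \<inter> Y. \<forall>b\<in>S \<inter> X. \<not> E c b")
  case True
  then obtain c where c: "c \<in> S \<inter> Y" "\<forall>b\<in>S \<inter> X. \<not> E c b"
    by blast
  have "E c u \<longleftrightarrow> u \<notin> X" if "u \<in> S - {c}" for u
  proof (cases "u \<in> X")
    case True
    then show ?thesis
      using that c(2) by auto
  next
    case False
    then have "u \<in> Y"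
      using that assms(6) by auto
    then show ?thesis
      using False that c(1) assms(3) unfolding is_clique_def by auto
  qed
  moreover have "c \<notin> X"
    using c(1) assms(1) by blast
  ultimately show ?thesis
    using c(1) by (intro bexI[of _ c]) auto
next
  case False
  then have witness: "\<forall>c\<in>S \<inter> Y. \<exists>b\<in>S \<inter> X. E c b"
    by blast
  have "S \<inter> X \<noteq> {}"
  proof
    assume "S \<inter> X = {}"
    then obtain c where "c \<in> S \<inter> Y"
      using assms(6,7) by blast
    then show False
      using witness \<open>S \<inter> X = {}\<close> by blast
  qed
  then obtain v where v: "v \<in> S \<inter> X" and v_dominant: "\<forall>u\<in>S \<inter> X. \<forall>y\<in>Y. E u y \<longrightarrow> E v y"
    using dominant[rule_format, of "S \<inter> X"] by blast
  have "E v u" if "u \<in> S - {v}" for u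
  proof (cases "u \<in> X")
    case True
    then show ?thesis
      using that v assms(2) unfolding is_clique_def by auto
  next
    case False
    then have "u \<in> S \<inter> Y"
      using that assms(6) by auto
    then obtain b where b: "b \<in> S \<inter> X" "E u b"
      using witness by auto
    then have "E b u"
      using sym[rule_format, of u b] \<open>u \<in> S \<inter> Y\<close> by blast
    then show ?thesis
      using v_dominant b(1) \<open>u \<in> S \<inter> Y\<close> by blast
  qed
  then show ?thesis
    using v by (intro bexI[of _ v]) auto
qed

lemma cw_represents_clique_pair:
  assumes "simple_graph (X \<union> Y) E" "X \<union> Y \<noteq> {}" "X \<inter> Y = {}"
    and "is_clique E X" "is_clique E Y"
    and "\<forall>X'\<subseteq>X. X' \<noteq> {} \<longrightarrow> (\<exists>v\<in>X'. \<forall>u\<in>X'. \<forall>y\<in>Y. E u y \<longrightarrow> E v y)"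
    and "distinct [T, a, b]"
  shows "\<exists>g. cw_represents g (X \<union> Y) E (\<lambda>x. if x \<in> X then a else b) \<and> cw_labels g \<subseteq> {T, a, b}"
proof -
  define lab where "lab = (\<lambda>x. if x \<in> X then a else b)"
  define J where "J v = (if v \<in> X then [a, b] else [b])" for v
  have lab_J: "lab u \<in> set (J v) \<longleftrightarrow> v \<in> X \<or> u \<notin> X" for u v
    using assms(7) by (auto simp: lab_def J_def)
  have sym: "\<forall>x\<in>X \<union> Y. \<forall>y\<in>X \<union> Y. E x y \<longleftrightarrow> E y x"
    using assms(1) unfolding simple_graph_def by blast
  have elim: "\<forall>S'\<subseteq>X \<union> Y. S' \<noteq> {} \<longrightarrow> (\<exists>v\<in>S'. \<forall>u\<in>S' - {v}. E v u \<longleftrightarrow> lab u \<in> set (J v))"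
    unfolding lab_J using clique_pair_elimination_vertex[OF assms(3-5) sym assms(6)] by blast
  have "T \<notin> lab ` (X \<union> Y)" "\<forall>x\<in>X \<union> Y. T \<notin> set (J x)"
    using assms(7) by (auto simp: lab_def J_def)
  then obtain g where g: "cw_represents g (X \<union> Y) E lab"
    and labels_g: "cw_labels g \<subseteq> insert T (lab ` (X \<union> Y) \<union> (\<Union>x\<in>X \<union> Y. set (J x)))"
    using cw_represents_by_elimination[OF assms(1,2) _ _ elim] by blast
  have "cw_labels g \<subseteq> {T, a, b}"
    using labels_g by (auto simp: lab_def J_def split: if_splits)
  with g show ?thesis
    unfolding lab_def by (intro exI[of _ g] conjI)
qed

lemma spike_partitionD:
  assumes "spike_partition V E t B C"
  shows "(\<Union>i\<in>{1..t}. B i \<union> C i) = V"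
    and "\<forall>i\<in>{1..t}. B i \<noteq> {} \<and> C i \<noteq> {}"
    and "\<forall>i\<in>{1..t}. \<forall>j\<in>{1..t}. B i \<inter> C j = {}"
    and "\<forall>i\<in>{1..t}. \<forall>j\<in>{1..t}. i \<noteq> j \<longrightarrow> B i \<inter> B j = {} \<and> C i \<inter> C j = {}"
    and "\<forall>i\<in>{1..t}. is_clique E (B i) \<and> is_clique E (C i)"
    and "\<forall>i\<in>{1..t}. \<forall>j\<in>{1..t}. i \<noteq> j \<longrightarrow>
        anticomplete_to E (B i) (B j) \<and> complete_to E (C i) (C j) \<and> anticomplete_to E (B i) (C j)"
    and "\<forall>i\<in>{1..t}. \<exists>bs. distinct bs \<and> set bs = B i \<and>
        (\<forall>k l. k \<le> l \<and> l < length bs \<longrightarrow> nbhd V E (bs ! l) \<inter> C i \<subseteq> nbhd V E (bs ! k) \<inter> C i)"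
  using assms unfolding spike_partition_def by simp_all

lemma spike_partition_part:
  assumes "spike_partition V E t B C" "i \<in> {1..t}"
  shows "B i \<union> C i \<subseteq> V" "B i \<noteq> {}" "B i \<inter> C i = {}" "is_clique E (B i)" "is_clique E (C i)"
    and "\<exists>bs. set bs = B i \<and>
      (\<forall>k l. k \<le> l \<and> l < length bs \<longrightarrow> nbhd V E (bs ! l) \<inter> C i \<subseteq> nbhd V E (bs ! k) \<inter> C i)"
proof -
  note D = spike_partitionD[OF assms(1)]
  show "B i \<union> C i \<subseteq> V"
    using D(1) assms(2) by blast
  show "B i \<noteq> {}"
    using D(2) assms(2) by blast
  show "B i \<inter> C i = {}"
    using D(3) assms(2) by blast
  show "is_clique E (B i)" "is_clique E (C i)"
    using D(5) assms(2) by blast+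
  show "\<exists>bs. set bs = B i \<and>
      (\<forall>k l. k \<le> l \<and> l < length bs \<longrightarrow> nbhd V E (bs ! l) \<inter> C i \<subseteq> nbhd V E (bs ! k) \<inter> C i)"
    using D(7) assms(2) by blast
qed

lemma spike_parts_disjoint:
  assumes "spike_partition V E t B C" "i \<in> {1..t}" "j \<in> {1..t}" "i \<noteq> j"
  shows "(B i \<union> C i) \<inter> (B j \<union> C j) = {}"
proof -
  have "B i \<inter> B j = {}" "C i \<inter> C j = {}" "B i \<inter> C j = {}" "B j \<inter> C i = {}"
    using spike_partitionD(3,4)[OF assms(1)] assms(2-4) by blast+
  then show ?thesis
    by blast
qed

lemma spike_cross_edges:
  assumes "simple_graph V E" "spike_partition V E t B C" "i \<in> {1..t}" "j \<in> {1..t}" "i \<noteq> j"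
    and "x \<in> B i \<union> C i" "y \<in> B j \<union> C j"
  shows "E x y \<longleftrightarrow> x \<in> C i \<and> y \<in> C j"
proof -
  note ij = spike_partitionD(6)[OF assms(2), rule_format, OF assms(3,4,5)]
  note ji = spike_partitionD(6)[OF assms(2), rule_format, OF assms(4,3) not_sym[OF assms(5)]]
  have "x \<in> V" "y \<in> V"
    using spike_partition_part(1)[OF assms(2,3)] spike_partition_part(1)[OF assms(2,4)] assms(6,7)
    by blast+
  then have sym: "E y x \<longleftrightarrow> E x y"
    using assms(1) unfolding simple_graph_def by blast
  show ?thesis
  proof (cases "x \<in> C i \<and> y \<in> C j")
    case True
    then show ?thesis
      using ij unfolding complete_to_def by auto
  next
    case False
    then have "x \<in> B i \<or> y \<in> B j"
      using assms(6,7) by blast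
    then have "\<not> E x y"
    proof
      assume "x \<in> B i"
      then show ?thesis
        using ij assms(7) unfolding anticomplete_to_def by blast
    next
      assume "y \<in> B j"
      then have "\<not> E y x"
        using ji assms(6) unfolding anticomplete_to_def by blast
      then show ?thesis
        using sym by simp
    qed
    then show ?thesis
      using False by simp
  qed
qed

lemma spike_part_dominant:
  assumes "spike_partition V E t B C" "i \<in> {1..t}"
  shows "\<forall>X\<subseteq>B i. X \<noteq> {} \<longrightarrow> (\<exists>v\<in>X. \<forall>u\<in>X. \<forall>y\<in>C i. E u y \<longrightarrow> E v y)"
proof (intro allI impI)
  fix X assume X: "X \<subseteq> B i" "X \<noteq> {}"
  obtain bs where "set bs = B i"
    and "\<forall>k l. k \<le> l \<and> l < length bs \<longrightarrow> nbhd V E (bs ! l) \<inter> C i \<subseteq> nbhd V E (bs ! k) \<inter> C i"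
    using spike_partition_part(6)[OF assms] by blast
  then obtain v where "v \<in> X" "\<forall>u\<in>X. nbhd V E u \<inter> C i \<subseteq> nbhd V E v \<inter> C i"
    using list_antitone_has_greatest[of bs "\<lambda>b. nbhd V E b \<inter> C i" X] X by blast
  moreover have "C i \<subseteq> V"
    using spike_partition_part(1)[OF assms] by blast
  ultimately show "\<exists>v\<in>X. \<forall>u\<in>X. \<forall>y\<in>C i. E u y \<longrightarrow> E v y"
    unfolding nbhd_def by blast
qed

lemma cw_represents_spike_part:
  assumes "simple_graph V E" "spike_partition V E t B C" "i \<in> {1..t}" "distinct [T, a, b]"
  shows "\<exists>g. cw_represents g (B i \<union> C i) E (\<lambda>x. if x \<in> B i then a else b) \<and> cw_labels g \<subseteq> {T, a, b}"
proof -
  note part = spike_partition_part[OF assms(2,3)]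
  have "simple_graph (B i \<union> C i) E" "B i \<union> C i \<noteq> {}"
    using simple_graph_subset[OF assms(1) part(1)] part(2) by blast+
  then show ?thesis
    by (rule cw_represents_clique_pair[OF _ _ part(3-5) spike_part_dominant[OF assms(2,3)] assms(4)])
qed

lemma cw_represents_spike_prefix:
  assumes simple: "simple_graph V E" and spike: "spike_partition V E t B C" and "k < t"
    and labels: "distinct [pb, pc, ab, ac]"
    and lab_B: "\<forall>i\<in>{1..t}. \<forall>x\<in>B i. lab x = pb" and lab_C: "\<forall>i\<in>{1..t}. \<forall>x\<in>C i. lab x = pc"
  shows "\<exists>e. cw_represents e (\<Union>i\<in>{1..Suc k}. B i \<union> C i) E lab \<and> cw_labels e \<subseteq> {pb, pc, ab, ac}"
  using \<open>k < t\<close>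
proof (induction k)
  case 0
  then have one: "1 \<in> {1..t}"
    by simp
  obtain g where g: "cw_represents g (B 1 \<union> C 1) E (\<lambda>x. if x \<in> B 1 then ab else ac)"
    and labels_g: "cw_labels g \<subseteq> {pb, ab, ac}"
    using cw_represents_spike_part[OF simple spike one, of pb ab ac] labels by auto
  have prefix: "(\<Union>i\<in>{1..Suc 0}. B i \<union> C i) = B 1 \<union> C 1"
    by simp
  have "cw_represents (Relabel ac pc (Relabel ab pb g)) (\<Union>i\<in>{1..Suc 0}. B i \<union> C i) E lab"
    unfolding prefix by (rule cw_represents_cong[OF cw_represents_Relabel[OF cw_represents_Relabel[OF g]]])
      (use labels lab_B lab_C one in auto)
  moreover have "cw_labels (Relabel ac pc (Relabel ab pb g)) \<subseteq> {pb, pc, ab, ac}"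
    using labels_g by auto
  ultimately show ?case
    by blast
next
  case (Suc k)
  define P where "P = (\<Union>i\<in>{1..Suc k}. B i \<union> C i)"
  define n where "n = Suc (Suc k)"
  have n: "n \<in> {1..t}"
    using Suc.prems unfolding n_def by simp
  obtain h where h: "cw_represents h P E lab" and labels_h: "cw_labels h \<subseteq> {pb, pc, ab, ac}"
    using Suc unfolding P_def by auto
  obtain g where g: "cw_represents g (B n \<union> C n) E (\<lambda>x. if x \<in> B n then ab else ac)"
    and labels_g: "cw_labels g \<subseteq> {pb, ab, ac}"
    using cw_represents_spike_part[OF simple spike n, of pb ab ac] labels by auto
  have part_of_P: "\<exists>j\<in>{1..t}. j \<noteq> n \<and> x \<in> B j \<union> C j" if x: "x \<in> P" for x
  proof -
    obtain j where j: "j \<in> {1..Suc k}" "x \<in> B j \<union> C j"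
      using x unfolding P_def by blast
    moreover have "j \<in> {1..t}" "j \<noteq> n"
      using j(1) Suc.prems unfolding n_def by auto
    ultimately show ?thesis
      by blast
  qed
  have lab_P: "lab x = (if x \<in> B j then pb else pc)" if "j \<in> {1..t}" "x \<in> B j \<union> C j" for j x
    using that lab_B lab_C by auto
  have lab_P_not_aux: "lab x \<noteq> ab" "lab x \<noteq> ac" if x: "x \<in> P" for x
  proof -
    obtain j where "j \<in> {1..t}" "x \<in> B j \<union> C j"
      using part_of_P[OF x] by blast
    then show "lab x \<noteq> ab" "lab x \<noteq> ac"
      using lab_P labels by auto
  qed
  \<comment> \<open>P carries only pb and pc, the new part only ab and ac: joining pc to ac adds exactly
    the edges between the C-sets\<close>
  have joined: "cw_represents (joins pc [ac] (DUnion h g)) (P \<union> (B n \<union> C n)) E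
      (\<lambda>x. if x \<in> P then lab x else if x \<in> B n then ab else ac)"
  proof (rule cw_represents_joins_DUnion[OF h g])
    show "P \<inter> (B n \<union> C n) = {}"
      using part_of_P spike_parts_disjoint[OF spike _ n] by blast
    show "\<forall>x\<in>P. \<forall>y\<in>B n \<union> C n. E y x \<longleftrightarrow> E x y"
      using part_of_P spike_partition_part(1)[OF spike] n simple
      unfolding simple_graph_def by (meson subsetD)
    show "\<forall>x\<in>P. \<forall>y\<in>B n \<union> C n. E x y \<longleftrightarrow>
        lab x = pc \<and> (if y \<in> B n then ab else ac) \<in> set [ac] \<or>
        lab x \<in> set [ac] \<and> (if y \<in> B n then ab else ac) = pc"
    proof (intro ballI)
      fix x y assume "x \<in> P" "y \<in> B n \<union> C n"
      then obtain j where j: "j \<in> {1..t}" "j \<noteq> n" "x \<in> B j \<union> C j"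
        using part_of_P by blast
      have "B j \<inter> C j = {}" "B n \<inter> C n = {}"
        using spike_partition_part(3)[OF spike] j(1) n by blast+
      then show "E x y \<longleftrightarrow> lab x = pc \<and> (if y \<in> B n then ab else ac) \<in> set [ac] \<or>
          lab x \<in> set [ac] \<and> (if y \<in> B n then ab else ac) = pc"
        using spike_cross_edges[OF simple spike j(1) n j(2,3) \<open>y \<in> B n \<union> C n\<close>]
          lab_P[OF j(1,3)] labels j(3) \<open>y \<in> B n \<union> C n\<close> by auto
    qed
  qed (use labels lab_P_not_aux in auto)
  have prefix: "(\<Union>i\<in>{1..Suc (Suc k)}. B i \<union> C i) = P \<union> (B n \<union> C n)"
    unfolding P_def n_def by (auto simp: atLeastAtMostSuc_conv)
  have "cw_represents (Relabel ac pc (Relabel ab pb (joins pc [ac] (DUnion h g))))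
      (\<Union>i\<in>{1..Suc (Suc k)}. B i \<union> C i) E lab"
    unfolding prefix
    by (rule cw_represents_cong[OF cw_represents_Relabel[OF cw_represents_Relabel[OF joined]]])
      (use labels lab_B lab_C lab_P_not_aux n in auto)
  moreover have "cw_labels (Relabel ac pc (Relabel ab pb (joins pc [ac] (DUnion h g)))) \<subseteq> {pb, pc, ab, ac}"
    using labels_h labels_g cw_labels_joins[of pc "[ac]" "DUnion h g"] by auto
  ultimately show ?case
    by blast
qed

theorem proposition8p5:
  fixes V :: "'v set" and E :: "'v \<Rightarrow> 'v \<Rightarrow> bool" and L :: "'v \<Rightarrow> 'l"
    and t :: nat and B C :: "nat \<Rightarrow> 'v set"
  assumes "simple_graph V E"
    and "t \<ge> 1"
    and "spike_partition V E t B C"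
    and "p \<noteq> q"
    and "\<forall>i\<in>{1..t}. \<forall>b\<in>B i. L b = p"
    and "\<forall>i\<in>{1..t}. \<forall>c\<in>C i. L c = q"
  shows "cwd V E L \<le> 4"
proof -
  define Lab :: "('l + nat) set" where "Lab = {Inl p, Inl q, Inr 0, Inr 1}"
  have "\<exists>e. cw_represents e (\<Union>i\<in>{1..Suc (t - 1)}. B i \<union> C i) E (\<lambda>x. Inl (L x)) \<and>
      cw_labels e \<subseteq> Lab"
    unfolding Lab_def by (rule cw_represents_spike_prefix[OF assms(1,3)]) (use assms(2,4-6) in auto)
  moreover have "(\<Union>i\<in>{1..Suc (t - 1)}. B i \<union> C i) = V"
    using assms(2) spike_partitionD(1)[OF assms(3)] by simp
  ultimately obtain e where "cw_represents e V E (\<lambda>x. Inl (L x))" and labels_e: "cw_labels e \<subseteq> Lab"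
    by auto
  then have "cwd V E L \<le> card (cw_labels e)"
    by (intro cwd_le_card_labels) (simp add: cw_constructs_iff_represents)
  also have "\<dots> \<le> card Lab"
    using labels_e by (intro card_mono) (simp_all add: Lab_def)
  also have "\<dots> \<le> 4"
    by (simp add: Lab_def card_insert_if)
  finally show ?thesis .
qed

end
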